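(* Let $n\ge1$, $\mathcal{X}$ the simplex in $\mathbb{R}^{n+1}$, $\theta$ a kernel, $\Phi$ a Lipschitz continuous smooth function on an open neighborhood of $\mathcal{X}$, and $\eta>0$. If $x(t)$ is a solution trajectory of the inertial dynamics (ID) in $\mathcal{X}^\circ$ that is defined for all $t\ge0$, then $\lim_{t\to\infty}\dot x(t)=0$.
   Context: $\mathcal{X}=\{x\in\mathbb{R}^{n+1}:x_\alpha\ge0,\sum_\alpha x_\alpha=1\}$ with relative interior $\mathcal{X}^\circ$. A kernel is a $C^\infty$ function $\theta:[0,\infty)\to\mathbb{R}\cup\{+\infty\}$ with $\theta(x)<\infty$ for $x>0$, $\lim_{x\to0^+}\theta'(x)=-\infty$, $\theta''>0$, $\theta'''<0$ on $(0,\infty)$. With $\theta''_\alpha=\theta''(x_\alpha)$, $\theta'''_\alpha=\theta'''(x_\alpha)$, $\Theta''=(\sum_\beta1/\theta''_\beta)^{-1}$, $v_\alpha=\partial\Phi/\partial x_\alpha$, the inertial dynamics (ID) on $\mathcal{X}^\circ$ are $$\ddot x_\alpha=\frac{1}{\theta''_\alpha}\Big[v_\alpha-\sum_{\beta}\frac{\Theta''}{\theta''_\beta}v_\beta\Big]-\frac{1}{2\theta''_\alpha}\Big[\theta'''_\alpha\dot x_\alpha^2-\sum_\beta\frac{\Theta''}{\theta''_\beta}\theta'''_\beta\dot x_\beta^2\Big]-\eta\dot x_\alpha.$$ *)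

theory Defs
  imports "HOL-Analysis.Analysis"
begin

definition std_simplex :: "(real ^ 'n::finite) set" where
  "std_simplex = {x. (\<forall>a. 0 \<le> x $ a) \<and> (\<Sum>a\<in>UNIV. x $ a) = 1}"

definition std_simplex_relint :: "(real ^ 'n::finite) set" where
  "std_simplex_relint = {x. (\<forall>a. 0 < x $ a) \<and> (\<Sum>a\<in>UNIV. x $ a) = 1}"

definition smooth1_on :: "(real \<Rightarrow> real) \<Rightarrow> real set \<Rightarrow> bool" where
  "smooth1_on f S \<longleftrightarrow> (\<forall>k. \<forall>x\<in>S. (deriv ^^ k) f differentiable (at x))"

text \<open>Kernel (restricted to (0,oo); the value at 0 does not enter the dynamics).\<close>
definition kernel :: "(real \<Rightarrow> real) \<Rightarrow> bool" where
  "kernel \<theta> \<longleftrightarrow> smooth1_on \<theta> {0<..}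
     \<and> filterlim (deriv \<theta>) at_bot (at_right 0)
     \<and> (\<forall>x>0. (deriv ^^ 2) \<theta> x > 0)
     \<and> (\<forall>x>0. (deriv ^^ 3) \<theta> x < 0)"

definition partial :: "'n::finite \<Rightarrow> (real ^ 'n \<Rightarrow> real) \<Rightarrow> real ^ 'n \<Rightarrow> real" where
  "partial i f x = frechet_derivative f (at x) (axis i 1)"

fun Ck_on :: "nat \<Rightarrow> (real ^ 'n::finite \<Rightarrow> real) \<Rightarrow> (real ^ 'n) set \<Rightarrow> bool" where
  "Ck_on 0 f U = continuous_on U f"
| "Ck_on (Suc k) f U = (f differentiable_on U \<and> (\<forall>i. Ck_on k (partial i f) U))"

definition smooth_on :: "(real ^ 'n::finite \<Rightarrow> real) \<Rightarrow> (real ^ 'n) set \<Rightarrow> bool" where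
  "smooth_on f U \<longleftrightarrow> (\<forall>k. Ck_on k f U)"

definition ID_rhs :: "(real \<Rightarrow> real) \<Rightarrow> (real ^ 'n::finite \<Rightarrow> real) \<Rightarrow> real
    \<Rightarrow> real ^ 'n \<Rightarrow> real ^ 'n \<Rightarrow> 'n \<Rightarrow> real" where
  "ID_rhs \<theta> \<Phi> \<eta> x xd a =
    (let th2 = (\<lambda>b. (deriv ^^ 2) \<theta> (x $ b));
         th3 = (\<lambda>b. (deriv ^^ 3) \<theta> (x $ b));
         Th2 = 1 / (\<Sum>b\<in>UNIV. 1 / th2 b);
         v = (\<lambda>b. partial b \<Phi> x)
     in (1 / th2 a) * (v a - (\<Sum>b\<in>UNIV. Th2 / th2 b * v b))
        - (1 / (2 * th2 a)) * (th3 a * (xd $ a)^2 - (\<Sum>b\<in>UNIV. Th2 / th2 b * th3 b * (xd $ b)^2))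
        - \<eta> * xd $ a)"

end

(* The quantity E = \<Sum>\<^sub>\<alpha> \<theta>''(x\<^sub>\<alpha>) x'\<^sub>\<alpha>\<^sup>2 - 2 \<Phi>(x) (twice the mechanical energy)
   satisfies E' = -2\<eta> K, where K is the kinetic part: the Lagrange-multiplier terms of (ID) cancel because
   the velocity is tangent to the simplex. Since \<Phi> is Lipschitz on the bounded simplex, E and hence K
   stay bounded, so the velocity is bounded (\<theta>'' \<ge> \<theta>''(1) on (0,1] as \<theta>''' < 0) and \<Phi>(x(t)) is Lipschitz
   in time. Then K can only decrease at a bounded rate, and \<integral> K < \<infinity> forces K \<rightarrow> 0, whence x' \<rightarrow> 0. *)

theory Submission
  imports Defs
begin

lemma has_real_derivative_vec_nth:
  fixes x :: "real \<Rightarrow> real ^ 'n::finite"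
  assumes "(x has_vector_derivative v) (at t within S)"
  shows "((\<lambda>s. x s $ a) has_real_derivative v $ a) (at t within S)"
proof -
  have "((\<lambda>s. x s $ a) has_derivative (\<lambda>h. (h *\<^sub>R v) $ a)) (at t within S)"
    using bounded_linear.has_derivative[OF bounded_linear_vec_nth assms[unfolded has_vector_derivative_def]] .
  moreover have "(\<lambda>h. (h *\<^sub>R v) $ a) = (*) (v $ a)"
    by (auto simp: mult.commute)
  ultimately show ?thesis
    by (simp add: has_field_derivative_def)
qed

lemma real_mvt_within:
  fixes f f' :: "real \<Rightarrow> real"
  assumes "a \<le> b" "{a..b} \<subseteq> S" "\<And>t. t \<in> {a..b} \<Longrightarrow> (f has_real_derivative f' t) (at t within S)"
  shows "\<exists>\<xi>\<in>{a..b}. f b - f a = f' \<xi> * (b - a)"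
proof -
  have "\<exists>\<xi>\<in>{a..b}. f b - f a = (\<lambda>t h. f' t * h) \<xi> (b - a)"
  proof (rule mvt_very_simple[OF assms(1)])
    fix t assume "a \<le> t" "t \<le> b"
    then have "(f has_real_derivative f' t) (at t within {a..b})"
      using assms(2,3) by (auto intro: has_field_derivative_subset)
    then show "(f has_derivative (\<lambda>h. f' t * h)) (at t within {a..b})"
      by (simp add: has_field_derivative_def)
  qed
  then show ?thesis by simp
qed

lemma antimono_on_atLeast_of_nonpos_derivative:
  fixes f f' :: "real \<Rightarrow> real"
  assumes "\<And>t. 0 \<le> t \<Longrightarrow> (f has_real_derivative f' t) (at t within {0..})"
    and "\<And>t. 0 \<le> t \<Longrightarrow> f' t \<le> 0"
    and "0 \<le> s" "s \<le> t"
  shows "f t \<le> f s"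
proof -
  obtain \<xi> where "\<xi> \<in> {s..t}" "f t - f s = f' \<xi> * (t - s)"
    using real_mvt_within[of s t "{0..}" f f'] assms by auto
  moreover have "f' \<xi> * (t - s) \<le> 0"
    using assms \<open>\<xi> \<in> {s..t}\<close> by (intro mult_nonpos_nonneg) auto
  ultimately show ?thesis by simp
qed

lemma has_real_derivative_within_atLeast_const_eq_0:
  fixes g :: "real \<Rightarrow> real"
  assumes "0 \<le> t" "(g has_real_derivative D) (at t within {0..})" "\<And>s. 0 \<le> s \<Longrightarrow> g s = c"
  shows "D = 0"
proof -
  have "(g has_real_derivative D) (at t within {t..t+1})"
    using assms by (intro has_field_derivative_subset[OF assms(2)]) auto
  moreover have "(g has_real_derivative 0) (at t within {t..t+1})"
    by (rule has_field_derivative_transform_within[where f="\<lambda>_. c" and d=1]) (use assms in auto)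
  ultimately show ?thesis
    using vector_derivative_unique_within_closed_interval[of t "t+1" t g D 0]
    by (auto simp: has_real_derivative_iff_has_vector_derivative)
qed

lemma has_real_derivative_compose_partial:
  fixes \<Phi> :: "real ^ 'n::finite \<Rightarrow> real"
  assumes "\<Phi> differentiable (at (x t))" "(x has_vector_derivative v) (at t within S)"
  shows "((\<lambda>s. \<Phi> (x s)) has_real_derivative (\<Sum>a\<in>UNIV. partial a \<Phi> (x t) * v $ a)) (at t within S)"
proof -
  define D where "D = frechet_derivative \<Phi> (at (x t))"
  have hD: "(\<Phi> has_derivative D) (at (x t))"
    using assms(1) unfolding D_def by (simp add: frechet_derivative_works)
  have lin: "linear D" using hD has_derivative_linear by blast
  have "D v = D (\<Sum>a\<in>UNIV. (v $ a) *\<^sub>R axis a 1)"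
    using basis_expansion[of v] by (simp add: scalar_mult_eq_scaleR)
  also have "\<dots> = (\<Sum>a\<in>UNIV. v $ a * D (axis a 1))"
    by (simp add: linear_sum[OF lin] linear_scale[OF lin])
  also have "\<dots> = (\<Sum>a\<in>UNIV. partial a \<Phi> (x t) * v $ a)"
    by (simp add: partial_def D_def mult.commute)
  finally have "(\<lambda>h. D (h *\<^sub>R v)) = (*) (\<Sum>a\<in>UNIV. partial a \<Phi> (x t) * v $ a)"
    by (auto simp: linear_scale[OF lin] mult.commute)
  moreover have "((\<lambda>s. \<Phi> (x s)) has_derivative (\<lambda>h. D (h *\<^sub>R v))) (at t within S)"
    using has_derivative_compose[OF assms(2)[unfolded has_vector_derivative_def] hD] by (simp add: o_def)
  ultimately show ?thesis by (simp add: has_field_derivative_def)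
qed

lemma dist_std_simplex_le_2:
  assumes "x \<in> std_simplex" "y \<in> std_simplex"
  shows "dist x y \<le> 2"
proof -
  have "dist x y \<le> (\<Sum>a\<in>UNIV. \<bar>x $ a - y $ a\<bar>)"
    using norm_le_l1_cart[of "x - y"] by (simp add: dist_norm)
  also have "\<dots> \<le> (\<Sum>a\<in>UNIV. x $ a + y $ a)"
    by (rule sum_mono) (use assms in \<open>auto simp: std_simplex_def abs_if\<close>)
  also have "\<dots> = 2"
    using assms by (simp add: std_simplex_def sum.distrib)
  finally show ?thesis .
qed

lemma std_simplex_relint_subset: "std_simplex_relint \<subseteq> std_simplex"
  by (auto simp: std_simplex_relint_def std_simplex_def less_imp_le)

lemma std_simplex_nth_le_1:
  assumes "x \<in> std_simplex"
  shows "x $ a \<le> 1"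
proof -
  have "x $ a \<le> (\<Sum>b\<in>UNIV. x $ b)"
    by (rule member_le_sum) (use assms in \<open>auto simp: std_simplex_def\<close>)
  then show ?thesis using assms by (simp add: std_simplex_def)
qed

lemma norm_le_sqrt_weighted_sum:
  fixes v :: "real ^ 'n::finite"
  assumes "0 < m" "\<And>a. m \<le> w a"
  shows "norm v \<le> sqrt ((\<Sum>a\<in>UNIV. w a * (v $ a)\<^sup>2) / m)"
proof -
  have "m * (\<Sum>a\<in>UNIV. (v $ a)\<^sup>2) \<le> (\<Sum>a\<in>UNIV. w a * (v $ a)\<^sup>2)"
    unfolding sum_distrib_left by (rule sum_mono) (simp add: assms mult_right_mono)
  then have "(\<Sum>a\<in>UNIV. (v $ a)\<^sup>2) \<le> (\<Sum>a\<in>UNIV. w a * (v $ a)\<^sup>2) / m"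
    using assms(1) by (simp add: field_simps)
  then show ?thesis
    unfolding norm_vec_def L2_set_def by (simp add: real_sqrt_le_mono)
qed

lemma tendsto_0_of_dissipation:
  fixes E K :: "real \<Rightarrow> real"
  assumes c: "0 < c" and C: "0 \<le> C"
    and dE: "\<And>t. 0 \<le> t \<Longrightarrow> (E has_real_derivative - c * K t) (at t within {0..})"
    and E_bdd: "\<And>t. 0 \<le> t \<Longrightarrow> B \<le> E t"
    and K_nonneg: "\<And>t. 0 \<le> t \<Longrightarrow> 0 \<le> K t"
    and K_lower: "\<And>s t. 0 \<le> s \<Longrightarrow> s \<le> t \<Longrightarrow> K s - C * (t - s) \<le> K t"
  shows "(K \<longlongrightarrow> 0) at_top"
proof (rule order_tendstoI)
  fix a :: real assume "a < 0"
  show "eventually (\<lambda>t. a < K t) at_top"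
    using eventually_ge_at_top[of 0] by eventually_elim (use K_nonneg \<open>a < 0\<close> in force)
next
  fix \<epsilon> :: real assume \<epsilon>: "0 < \<epsilon>"
  have E_antimono: "E t \<le> E s" if "0 \<le> s" "s \<le> t" for s t
    by (rule antimono_on_atLeast_of_nonpos_derivative[OF dE _ that]) (use c K_nonneg in auto)
  define E_inf where "E_inf = Inf (E ` {0..})"
  have bdd: "bdd_below (E ` {0..})" using E_bdd by (intro bdd_belowI2) auto
  define \<delta> where "\<delta> = \<epsilon> / (2 * (C + 1))"
  have \<delta>: "0 < \<delta>" "C * \<delta> \<le> \<epsilon> / 2"
    unfolding \<delta>_def using \<epsilon> C by (simp_all add: field_simps)
  obtain t0 where t0: "0 \<le> t0" "E t0 < E_inf + c * (\<epsilon> / 2) * \<delta>"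
    using cInf_less_iff[OF _ bdd, of "E_inf + c * (\<epsilon> / 2) * \<delta>"] c \<epsilon> \<delta>
    unfolding E_inf_def by auto
  show "eventually (\<lambda>t. K t < \<epsilon>) at_top"
    using eventually_ge_at_top[of t0]
  proof eventually_elim
    fix t assume "t0 \<le> t"
    with t0 have "0 \<le> t" by simp
    show "K t < \<epsilon>"
    proof (rule ccontr)
      assume "\<not> K t < \<epsilon>"
      \<comment> \<open>then \<open>K \<ge> \<epsilon>/2\<close> on \<open>[t, t+\<delta>]\<close>, so \<open>E\<close> drops below its infimum\<close>
      obtain \<xi> where \<xi>: "\<xi> \<in> {t..t+\<delta>}" "E (t + \<delta>) - E t = - c * K \<xi> * \<delta>"
        using real_mvt_within[of t "t + \<delta>" "{0..}" E "\<lambda>t. - c * K t"] dE \<delta> \<open>0 \<le> t\<close> by auto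
      have "K t - C * \<delta> \<le> K \<xi>"
        using K_lower[of t \<xi>] \<xi>(1) C \<open>0 \<le> t\<close> mult_left_mono[of "\<xi> - t" \<delta> C] by auto
      with \<open>\<not> K t < \<epsilon>\<close> \<delta> have "\<epsilon> / 2 \<le> K \<xi>" by simp
      then have "c * (\<epsilon> / 2) * \<delta> \<le> c * K \<xi> * \<delta>"
        using c \<delta> by (intro mult_right_mono mult_left_mono) auto
      moreover have "E t \<le> E t0" using E_antimono t0 \<open>t0 \<le> t\<close> by simp
      moreover have "E_inf \<le> E (t + \<delta>)" unfolding E_inf_def
        by (rule cInf_lower[OF _ bdd]) (use \<open>0 \<le> t\<close> \<delta> in auto)
      ultimately show False using t0 \<xi>(2) by simp
    qed
  qed
qed

lemma kernel_deriv2_has_derivative: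
  assumes "kernel \<theta>" "0 < y"
  shows "((deriv ^^ 2) \<theta> has_real_derivative (deriv ^^ 3) \<theta> y) (at y)"
proof -
  have "(deriv ^^ 2) \<theta> differentiable (at y)"
    using assms unfolding kernel_def smooth1_on_def by auto
  then show ?thesis
    by (simp add: DERIV_deriv_iff_real_differentiable numeral_3_eq_3 numeral_2_eq_2)
qed

lemma kernel_deriv2_ge:
  assumes "kernel \<theta>" "0 < y" "y \<le> 1"
  shows "(deriv ^^ 2) \<theta> 1 \<le> (deriv ^^ 2) \<theta> y"
proof (rule DERIV_nonpos_imp_nonincreasing[OF assms(3)])
  fix z assume "y \<le> z" "z \<le> 1"
  then show "\<exists>D. ((deriv ^^ 2) \<theta> has_real_derivative D) (at z) \<and> D \<le> 0"
    using assms kernel_deriv2_has_derivative[OF assms(1)] unfolding kernel_def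
    by (meson less_eq_real_def less_le_trans)
qed

lemma ID_rhs_power_balance:
  fixes x w :: "real ^ 'n::finite"
  assumes pos: "\<And>a. 0 < (deriv ^^ 2) \<theta> (x $ a)" and tangent: "(\<Sum>a\<in>UNIV. w $ a) = 0"
  shows "(\<Sum>a\<in>UNIV. (deriv ^^ 3) \<theta> (x $ a) * w $ a * (w $ a)\<^sup>2
            + 2 * (deriv ^^ 2) \<theta> (x $ a) * w $ a * ID_rhs \<theta> \<Phi> \<eta> x w a)
         = 2 * (\<Sum>a\<in>UNIV. partial a \<Phi> x * w $ a)
           - 2 * \<eta> * (\<Sum>a\<in>UNIV. (deriv ^^ 2) \<theta> (x $ a) * (w $ a)\<^sup>2)"
proof -
  define th2 where "th2 b = (deriv ^^ 2) \<theta> (x $ b)" for b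
  define th3 where "th3 b = (deriv ^^ 3) \<theta> (x $ b)" for b
  define v where "v b = partial b \<Phi> x" for b
  define S1 where "S1 = (\<Sum>b\<in>UNIV. 1 / (\<Sum>c\<in>UNIV. 1 / th2 c) / th2 b * v b)"
  define S2 where "S2 = (\<Sum>b\<in>UNIV. 1 / (\<Sum>c\<in>UNIV. 1 / th2 c) / th2 b * th3 b * (w $ b)\<^sup>2)"
  \<comment> \<open>\<open>S1\<close> and \<open>S2\<close> do not depend on the coordinate, so they drop out against \<open>\<Sum> w = 0\<close>\<close>
  have "th3 a * w $ a * (w $ a)\<^sup>2 + 2 * th2 a * w $ a * ID_rhs \<theta> \<Phi> \<eta> x w a
      = 2 * v a * w $ a - 2 * \<eta> * (th2 a * (w $ a)\<^sup>2) + w $ a * (S2 - 2 * S1)" for a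
    using pos[of a] unfolding ID_rhs_def Let_def th2_def th3_def v_def S1_def S2_def
    by (simp add: field_simps power2_eq_square)
  then have "(\<Sum>a\<in>UNIV. th3 a * w $ a * (w $ a)\<^sup>2 + 2 * th2 a * w $ a * ID_rhs \<theta> \<Phi> \<eta> x w a)
      = 2 * (\<Sum>a\<in>UNIV. v a * w $ a) - 2 * \<eta> * (\<Sum>a\<in>UNIV. th2 a * (w $ a)\<^sup>2)
        + (\<Sum>a\<in>UNIV. w $ a) * (S2 - 2 * S1)"
    by (simp add: sum.distrib sum_subtractf sum_distrib_left sum_distrib_right mult.assoc)
  then show ?thesis
    using tangent unfolding th2_def th3_def v_def by simp
qed

locale ID_trajectory =
  fixes \<theta> :: "real \<Rightarrow> real" and \<Phi> :: "real ^ 'n::finite \<Rightarrow> real"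
    and U :: "(real ^ 'n) set" and L \<eta> :: real
    and x xd xdd :: "real \<Rightarrow> real ^ 'n"
  assumes kernel: "kernel \<theta>"
    and open_U: "open U" and simplex_subset: "std_simplex \<subseteq> U"
    and Phi_differentiable: "\<Phi> differentiable_on U"
    and Phi_lipschitz: "L-lipschitz_on U \<Phi>"
    and friction: "0 < \<eta>"
    and x_in: "\<And>t. 0 \<le> t \<Longrightarrow> x t \<in> std_simplex_relint"
    and x_deriv: "\<And>t. 0 \<le> t \<Longrightarrow> (x has_vector_derivative xd t) (at t within {0..})"
    and xd_deriv: "\<And>t. 0 \<le> t \<Longrightarrow> (xd has_vector_derivative xdd t) (at t within {0..})"
    and ID: "\<And>t a. 0 \<le> t \<Longrightarrow> xdd t $ a = ID_rhs \<theta> \<Phi> \<eta> (x t) (xd t) a"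
begin

definition kinetic_energy :: "real \<Rightarrow> real" where
  "kinetic_energy t = (\<Sum>a\<in>UNIV. (deriv ^^ 2) \<theta> (x t $ a) * (xd t $ a)\<^sup>2)"

definition energy :: "real \<Rightarrow> real" where
  "energy t = kinetic_energy t - 2 * \<Phi> (x t)"

lemma x_in_simplex: "0 \<le> t \<Longrightarrow> x t \<in> std_simplex"
  using x_in std_simplex_relint_subset by blast

lemma x_pos: "0 \<le> t \<Longrightarrow> 0 < x t $ a"
  using x_in by (simp add: std_simplex_relint_def)

lemma x_in_U: "0 \<le> t \<Longrightarrow> x t \<in> U"
  using x_in_simplex simplex_subset by blast

lemma deriv2_pos: "0 \<le> t \<Longrightarrow> 0 < (deriv ^^ 2) \<theta> (x t $ a)"
  using kernel x_pos unfolding kernel_def by blast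

lemma xd_sum_eq_0:
  assumes "0 \<le> t"
  shows "(\<Sum>a\<in>UNIV. xd t $ a) = 0"
proof (rule has_real_derivative_within_atLeast_const_eq_0[OF assms])
  show "((\<lambda>s. \<Sum>a\<in>UNIV. x s $ a) has_real_derivative (\<Sum>a\<in>UNIV. xd t $ a)) (at t within {0..})"
    by (intro DERIV_sum has_real_derivative_vec_nth x_deriv assms)
  show "\<And>s. 0 \<le> s \<Longrightarrow> (\<Sum>a\<in>UNIV. x s $ a) = 1"
    using x_in by (simp add: std_simplex_relint_def)
qed

lemma potential_has_derivative:
  assumes "0 \<le> t"
  shows "((\<lambda>s. \<Phi> (x s)) has_real_derivative (\<Sum>a\<in>UNIV. partial a \<Phi> (x t) * xd t $ a))
           (at t within {0..})"
proof (rule has_real_derivative_compose_partial[OF _ x_deriv[OF assms]])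
  show "\<Phi> differentiable (at (x t))"
    using Phi_differentiable open_U x_in_U[OF assms] differentiable_on_eq_differentiable_at by blast
qed

lemma kinetic_energy_has_derivative:
  assumes "0 \<le> t"
  shows "(kinetic_energy has_real_derivative
            2 * (\<Sum>a\<in>UNIV. partial a \<Phi> (x t) * xd t $ a) - 2 * \<eta> * kinetic_energy t)
           (at t within {0..})"
proof -
  have "((\<lambda>s. (deriv ^^ 2) \<theta> (x s $ a) * (xd s $ a)\<^sup>2) has_real_derivative
          (deriv ^^ 3) \<theta> (x t $ a) * xd t $ a * (xd t $ a)\<^sup>2
          + 2 * (deriv ^^ 2) \<theta> (x t $ a) * xd t $ a * xdd t $ a) (at t within {0..})" for a
  proof -
    have "((\<lambda>s. (deriv ^^ 2) \<theta> (x s $ a)) has_real_derivative (deriv ^^ 3) \<theta> (x t $ a) * xd t $ a)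
            (at t within {0..})"
      by (rule DERIV_chain2[OF kernel_deriv2_has_derivative[OF kernel x_pos[OF assms]]
            has_real_derivative_vec_nth[OF x_deriv[OF assms]]])
    moreover have "((\<lambda>s. (xd s $ a)\<^sup>2) has_real_derivative 2 * xd t $ a * xdd t $ a) (at t within {0..})"
      using DERIV_power[OF has_real_derivative_vec_nth[OF xd_deriv[OF assms]], where n=2]
      by (simp add: mult.commute mult.left_commute)
    ultimately show ?thesis
      by (rule DERIV_mult[THEN DERIV_cong]) (simp add: algebra_simps)
  qed
  then have "(kinetic_energy has_real_derivative
      (\<Sum>a\<in>UNIV. (deriv ^^ 3) \<theta> (x t $ a) * xd t $ a * (xd t $ a)\<^sup>2
         + 2 * (deriv ^^ 2) \<theta> (x t $ a) * xd t $ a * xdd t $ a)) (at t within {0..})"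
    unfolding kinetic_energy_def[abs_def] by (intro DERIV_sum)
  then show ?thesis
    using ID_rhs_power_balance[OF deriv2_pos[OF assms] xd_sum_eq_0[OF assms]]
    by (simp add: ID[OF assms] kinetic_energy_def)
qed

lemma energy_has_derivative:
  assumes "0 \<le> t"
  shows "(energy has_real_derivative - 2 * \<eta> * kinetic_energy t) (at t within {0..})"
  using DERIV_diff[OF kinetic_energy_has_derivative[OF assms]
      DERIV_cmult[OF potential_has_derivative[OF assms], of 2]]
  unfolding energy_def[abs_def] by simp

lemma kinetic_energy_nonneg: "0 \<le> t \<Longrightarrow> 0 \<le> kinetic_energy t"
  unfolding kinetic_energy_def by (intro sum_nonneg mult_nonneg_nonneg less_imp_le[OF deriv2_pos]) auto

lemma energy_antimono: "0 \<le> s \<Longrightarrow> s \<le> t \<Longrightarrow> energy t \<le> energy s"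
  by (rule antimono_on_atLeast_of_nonpos_derivative[OF energy_has_derivative])
    (use friction kinetic_energy_nonneg in auto)

lemma potential_dist_le: "0 \<le> s \<Longrightarrow> 0 \<le> t \<Longrightarrow> \<bar>\<Phi> (x t) - \<Phi> (x s)\<bar> \<le> L * dist (x t) (x s)"
  using lipschitz_onD[OF Phi_lipschitz x_in_U x_in_U] by (simp add: dist_real_def)

lemma potential_bounded: "0 \<le> t \<Longrightarrow> \<bar>\<Phi> (x t) - \<Phi> (x 0)\<bar> \<le> 2 * L"
  using potential_dist_le[of 0 t] dist_std_simplex_le_2[OF x_in_simplex x_in_simplex, of t 0]
    mult_left_mono[OF _ lipschitz_on_nonneg[OF Phi_lipschitz], of "dist (x t) (x 0)" 2]
  by simp

lemma kinetic_energy_bounded: "\<exists>M. \<forall>t\<ge>0. kinetic_energy t \<le> M"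
proof (intro exI allI impI)
  fix t :: real assume "0 \<le> t"
  then have "energy t \<le> energy 0" by (rule energy_antimono[OF order_refl])
  with potential_bounded[OF \<open>0 \<le> t\<close>]
  show "kinetic_energy t \<le> energy 0 + 2 * \<Phi> (x 0) + 4 * L"
    unfolding energy_def by simp
qed

lemma norm_velocity_le:
  assumes "0 \<le> t"
  shows "norm (xd t) \<le> sqrt (kinetic_energy t / (deriv ^^ 2) \<theta> 1)"
  unfolding kinetic_energy_def
proof (rule norm_le_sqrt_weighted_sum)
  show "0 < (deriv ^^ 2) \<theta> 1" using kernel by (simp add: kernel_def)
  show "(deriv ^^ 2) \<theta> 1 \<le> (deriv ^^ 2) \<theta> (x t $ a)" for a
    using kernel_deriv2_ge[OF kernel x_pos[OF assms] std_simplex_nth_le_1[OF x_in_simplex[OF assms]]] .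
qed

lemma velocity_bounded: "\<exists>V\<ge>0. \<forall>t\<ge>0. norm (xd t) \<le> V"
proof -
  obtain M where M: "\<And>t. 0 \<le> t \<Longrightarrow> kinetic_energy t \<le> M"
    using kinetic_energy_bounded by blast
  have "0 < (deriv ^^ 2) \<theta> 1" using kernel by (simp add: kernel_def)
  then have "norm (xd t) \<le> sqrt (M / (deriv ^^ 2) \<theta> 1)" if "0 \<le> t" for t
    using norm_velocity_le[OF that] M[OF that] by (meson divide_right_mono less_imp_le order_trans real_sqrt_le_mono)
  then show ?thesis by (meson norm_ge_zero order_trans order_refl)
qed

lemma trajectory_lipschitz: "\<exists>V\<ge>0. \<forall>s\<ge>0. \<forall>t\<ge>0. dist (x t) (x s) \<le> V * \<bar>t - s\<bar>"
proof -
  obtain V where "0 \<le> V" and V: "\<And>t. 0 \<le> t \<Longrightarrow> norm (xd t) \<le> V"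
    using velocity_bounded by blast
  have "norm (x t - x s) \<le> V * norm (t - s)" if st: "0 \<le> s" "0 \<le> t" for s t
  proof (rule differentiable_bound[where f' = "\<lambda>t h. h *\<^sub>R xd t"])
    fix \<tau> :: real assume "\<tau> \<in> {0..}"
    then show "(x has_derivative (\<lambda>h. h *\<^sub>R xd \<tau>)) (at \<tau> within {0..})"
      using x_deriv by (simp add: has_vector_derivative_def)
    have "norm (h *\<^sub>R xd \<tau>) \<le> V * norm h" for h
      using V[of \<tau>] \<open>\<tau> \<in> {0..}\<close> by (simp add: mult.commute[of V] mult_left_mono)
    then show "onorm (\<lambda>h. h *\<^sub>R xd \<tau>) \<le> V"
      by (rule onorm_le)
  qed (use st in simp_all)
  with \<open>0 \<le> V\<close> show ?thesis by (auto simp: dist_norm)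
qed

lemma kinetic_energy_lower_lipschitz:
  "\<exists>C\<ge>0. \<forall>s t. 0 \<le> s \<longrightarrow> s \<le> t \<longrightarrow> kinetic_energy s - C * (t - s) \<le> kinetic_energy t"
proof -
  obtain M where M: "\<And>t. 0 \<le> t \<Longrightarrow> kinetic_energy t \<le> M"
    using kinetic_energy_bounded by blast
  obtain V where "0 \<le> V" and V: "\<And>s t. 0 \<le> s \<Longrightarrow> 0 \<le> t \<Longrightarrow> dist (x t) (x s) \<le> V * \<bar>t - s\<bar>"
    using trajectory_lipschitz by blast
  have L: "0 \<le> L" using lipschitz_on_nonneg[OF Phi_lipschitz] .
  have M0: "0 \<le> M" using M[of 0] kinetic_energy_nonneg[of 0] by simp
  define C where "C = 2 * \<eta> * M + 2 * L * V"
  have "kinetic_energy s - C * (t - s) \<le> kinetic_energy t" if st: "0 \<le> s" "s \<le> t" for s t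
  proof -
    have "{s..t} \<subseteq> {0..}" using st by auto
    then obtain \<xi> where \<xi>: "\<xi> \<in> {s..t}" "energy t - energy s = - 2 * \<eta> * kinetic_energy \<xi> * (t - s)"
      using real_mvt_within[OF st(2), of "{0..}" energy "\<lambda>t. - 2 * \<eta> * kinetic_energy t"]
        energy_has_derivative by blast
    have "2 * \<eta> * kinetic_energy \<xi> * (t - s) \<le> 2 * \<eta> * M * (t - s)"
      using M[of \<xi>] \<xi>(1) st friction by (intro mult_right_mono mult_left_mono) auto
    with \<xi>(2) have "- (2 * \<eta> * M * (t - s)) \<le> energy t - energy s" by simp
    moreover have "\<bar>\<Phi> (x t) - \<Phi> (x s)\<bar> \<le> L * (V * (t - s))"
    proof -
      have "dist (x t) (x s) \<le> V * (t - s)" using V[of s t] st by simp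
      then show ?thesis
        using potential_dist_le[of s t] mult_left_mono[OF _ L] st by (meson order_trans)
    qed
    moreover have "kinetic_energy t - kinetic_energy s = energy t - energy s + 2 * (\<Phi> (x t) - \<Phi> (x s))"
      unfolding energy_def by simp
    moreover have "C * (t - s) = 2 * \<eta> * M * (t - s) + 2 * (L * (V * (t - s)))"
      unfolding C_def by (simp add: algebra_simps)
    ultimately show ?thesis unfolding abs_le_iff by (smt (verit))
  qed
  moreover have "0 \<le> C" unfolding C_def using friction M0 L \<open>0 \<le> V\<close> by simp
  ultimately show ?thesis by blast
qed

lemma kinetic_energy_tendsto_0: "(kinetic_energy \<longlongrightarrow> 0) at_top"
proof -
  obtain C where "0 \<le> C" and C: "\<And>s t. 0 \<le> s \<Longrightarrow> s \<le> t \<Longrightarrow> kinetic_energy s - C * (t - s) \<le> kinetic_energy t"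
    using kinetic_energy_lower_lipschitz by blast
  have "- 2 * \<Phi> (x 0) - 4 * L \<le> energy t" if "0 \<le> t" for t
    using kinetic_energy_nonneg[OF that] potential_bounded[OF that] unfolding energy_def by simp
  moreover have "(energy has_real_derivative - (2 * \<eta>) * kinetic_energy t) (at t within {0..})"
    if "0 \<le> t" for t
    using energy_has_derivative[OF that] by simp
  ultimately show ?thesis
    using friction \<open>0 \<le> C\<close> C kinetic_energy_nonneg
    by (intro tendsto_0_of_dissipation[where E = energy and c = "2 * \<eta>"]) auto
qed

lemma velocity_tendsto_0: "(xd \<longlongrightarrow> 0) at_top"
proof (rule Lim_null_comparison)
  show "eventually (\<lambda>t. norm (xd t) \<le> sqrt (kinetic_energy t / (deriv ^^ 2) \<theta> 1)) at_top"
    using eventually_ge_at_top[of 0] by eventually_elim (rule norm_velocity_le)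
  show "((\<lambda>t. sqrt (kinetic_energy t / (deriv ^^ 2) \<theta> 1)) \<longlongrightarrow> 0) at_top"
    using tendsto_real_sqrt[OF tendsto_divide_zero[OF kinetic_energy_tendsto_0]] by simp
qed

end
theorem proposition3p2:
  fixes \<theta> :: "real \<Rightarrow> real" and \<Phi> :: "real ^ 'n::finite \<Rightarrow> real"
    and U :: "(real ^ 'n) set" and \<eta> :: real
    and x xd xdd :: "real \<Rightarrow> real ^ 'n"
  assumes dim: "CARD('n) \<ge> 2"
    and ker: "kernel \<theta>"
    and U: "open U" "std_simplex \<subseteq> U"
    and Phi_smooth: "smooth_on \<Phi> U"
    and Phi_lip: "\<exists>L. L-lipschitz_on U \<Phi>"
    and eta: "\<eta> > 0"
    and x_in: "\<forall>t\<ge>0. x t \<in> std_simplex_relint"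
    and x_deriv: "\<forall>t\<ge>0. (x has_vector_derivative xd t) (at t within {0..})"
    and xd_deriv: "\<forall>t\<ge>0. (xd has_vector_derivative xdd t) (at t within {0..})"
    and ID: "\<forall>t\<ge>0. \<forall>a. xdd t $ a = ID_rhs \<theta> \<Phi> \<eta> (x t) (xd t) a"
  shows "(xd \<longlongrightarrow> 0) at_top"
proof -
  obtain L where "L-lipschitz_on U \<Phi>"
    using Phi_lip by blast
  moreover have "\<Phi> differentiable_on U"
    using Phi_smooth unfolding smooth_on_def by (metis Ck_on.simps(2))
  ultimately interpret ID_trajectory \<theta> \<Phi> U L \<eta> x xd xdd
    using assms by unfold_locales auto
  show ?thesis
    by (rule velocity_tendsto_0)
qed

end
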